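(* Let $\phi:\mathscr{M}[\underline x]\to\mathbb{R}$ be a homomorphism of $\mathbb{R}$-algebras. The following are equivalent: (i) $\phi(\mathtt{m}(f^2))\ge0$ for all $f\in\mathscr{M}[\underline x]$; (ii) $\phi(\mathtt{m}(p^2))\ge0$ for all $p\in\mathbb{R}[\underline x]$; (iii) the real matrix $(\phi(\mathtt{m}(uv)))_{u,v\in[\underline x]_d}$ is positive semidefinite for all $d\in\mathbb{N}$.
   Context: Let $\mathbb{R}[\underline x]=\mathbb{R}[x_1,\dots,x_n]$, $\mathscr{M}=\mathbb{R}[\mathtt{m}_{i_1,\dots,i_n}\colon (i_1,\dots,i_n)\in\mathbb{N}_0^n]$ the polynomial ring in countably many indeterminates with $\mathtt{m}_{0,\dots,0}:=1$, $\mathscr{M}[\underline x]=\mathscr{M}\otimes_{\mathbb{R}}\mathbb{R}[\underline x]$, and $\mathtt{m}:\mathscr{M}[\underline x]\to\mathscr{M}$ the unique $\mathscr{M}$-linear map with $\mathtt{m}(x_1^{i_1}\cdots x_n^{i_n})=\mathtt{m}_{i_1,\dots,i_n}$. $[\underline x]_d$ denotes the set of monomials in $x_1,\dots,x_n$ of degree at most $d$. *)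

theory Defs
  imports Complex_Main "HOL-Library.Poly_Mapping"
begin

text \<open>Monomials in the variables x_i, i ranging over a finite type 'n
  (so n = CARD of that type), are finitely supported exponent vectors.
  R[x] is the ring of finitely supported coefficient maps on monomials.\<close>

type_synonym 'n monom = "'n \<Rightarrow>\<^sub>0 nat"
type_synonym 'n rpoly = "'n monom \<Rightarrow>\<^sub>0 real"

text \<open>Nonzero multi-indices: these index the indeterminates m_alpha of the
  ring M (the indeterminate m_0 is identified with 1).\<close>
typedef 'n nzidx = "{\<alpha> :: 'n monom. \<alpha> \<noteq> 0}"
proof -
  have "Poly_Mapping.keys (Poly_Mapping.single undefined (1::nat)) \<noteq> Poly_Mapping.keys (0 :: 'n \<Rightarrow>\<^sub>0 nat)"
    by simp
  then have "Poly_Mapping.single undefined (1::nat) \<noteq> (0 :: 'n \<Rightarrow>\<^sub>0 nat)" by metis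
  then show ?thesis by blast
qed

text \<open>M = R[m_alpha : alpha nonzero]; M[x] = polynomials in x with coefficients in M.\<close>
type_synonym 'n Mring = "('n nzidx \<Rightarrow>\<^sub>0 nat) \<Rightarrow>\<^sub>0 real"
type_synonym 'n Mxring = "'n monom \<Rightarrow>\<^sub>0 'n Mring"

definition mvar :: "'n monom \<Rightarrow> 'n Mring" where
  "mvar \<alpha> = (if \<alpha> = 0 then 1
              else Poly_Mapping.single (Poly_Mapping.single (Abs_nzidx \<alpha>) 1) 1)"

definition mmap :: "'n Mxring \<Rightarrow> 'n Mring" where
  "mmap f = (\<Sum>\<alpha>\<in>Poly_Mapping.keys f. Poly_Mapping.lookup f \<alpha> * mvar \<alpha>)"

definition constM :: "real \<Rightarrow> 'n Mring" where
  "constM c = Poly_Mapping.single 0 c"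

definition constMx :: "'n Mring \<Rightarrow> 'n Mxring" where
  "constMx a = Poly_Mapping.single 0 a"

definition embR :: "'n rpoly \<Rightarrow> 'n Mxring" where
  "embR p = Poly_Mapping.map constM p"

definition xmon :: "'n monom \<Rightarrow> 'n Mxring" where
  "xmon \<alpha> = Poly_Mapping.single \<alpha> 1"

definition mdeg :: "('n::finite) monom \<Rightarrow> nat" where
  "mdeg \<alpha> = (\<Sum>i\<in>UNIV. Poly_Mapping.lookup \<alpha> i)"

definition monoms_upto :: "nat \<Rightarrow> ('n::finite) monom set" where
  "monoms_upto d = {\<alpha>. mdeg \<alpha> \<le> d}"

definition R_alg_hom :: "('n Mxring \<Rightarrow> real) \<Rightarrow> bool" where
  "R_alg_hom \<phi> \<longleftrightarrow>
     (\<forall>f g. \<phi> (f + g) = \<phi> f + \<phi> g) \<and>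
     (\<forall>f g. \<phi> (f * g) = \<phi> f * \<phi> g) \<and>
     (\<forall>c. \<phi> (constMx (constM c)) = c)"

definition psd_on :: "'a set \<Rightarrow> ('a \<Rightarrow> 'a \<Rightarrow> real) \<Rightarrow> bool" where
  "psd_on S M \<longleftrightarrow> (\<forall>u\<in>S. \<forall>v\<in>S. M u v = M v u) \<and>
     (\<forall>c :: 'a \<Rightarrow> real. (\<Sum>u\<in>S. \<Sum>v\<in>S. c u * M u v * c v) \<ge> 0)"

end

theory Submission
  imports Defs
begin

(* Restricted to the constants, phi is a ring homomorphism psi : M -> R fixing R.
   Writing f = sum_a f_a x^a with f_a in M, one gets
     phi(m(f^2)) = sum_{a,b} psi(f_a) psi(f_b) phi(m(x^a x^b)),
   the quadratic form of the moment matrix at the real vector (psi(f_a))_a.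
   Hence phi(m(f^2)) = phi(m(p^2)) for the real polynomial p with coefficients
   psi(f_a), which gives (ii) ==> (i); and the values phi(m(p^2)) with
   deg p <= d are exactly the values of the quadratic form of the moment
   matrix indexed by [x]_d, which gives (ii) <==> (iii). *)

lemma R_alg_hom_add: "R_alg_hom \<phi> \<Longrightarrow> \<phi> (f + g) = \<phi> f + \<phi> g"
  by (simp add: R_alg_hom_def)

lemma R_alg_hom_mult: "R_alg_hom \<phi> \<Longrightarrow> \<phi> (f * g) = \<phi> f * \<phi> g"
  by (simp add: R_alg_hom_def)

lemma R_alg_hom_const: "R_alg_hom \<phi> \<Longrightarrow> \<phi> (constMx (constM c)) = c"
  by (simp add: R_alg_hom_def)

lemma R_alg_hom_zero: "R_alg_hom \<phi> \<Longrightarrow> \<phi> 0 = 0"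
  using R_alg_hom_add[of \<phi> 0 0] by simp

lemma R_alg_hom_sum: "R_alg_hom \<phi> \<Longrightarrow> \<phi> (sum g A) = (\<Sum>a\<in>A. \<phi> (g a))"
  by (induction A rule: infinite_finite_induct) (auto simp: R_alg_hom_zero R_alg_hom_add)

lemma constMx_zero: "constMx 0 = 0"
  by (simp add: constMx_def)

lemma constMx_add: "constMx (a + b) = constMx a + constMx b"
  by (simp add: constMx_def single_add)

lemma constMx_mult: "constMx (a * b) = constMx a * constMx b"
  by (simp add: constMx_def mult_single)

lemma constMx_sum: "constMx (sum g A) = (\<Sum>a\<in>A. constMx (g a))"
  by (induction A rule: infinite_finite_induct) (auto simp: constMx_zero constMx_add)

definition coeff_hom :: "('n Mxring \<Rightarrow> real) \<Rightarrow> 'n Mring \<Rightarrow> real" where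
  "coeff_hom \<phi> a = \<phi> (constMx a)"

lemma coeff_hom_zero: "R_alg_hom \<phi> \<Longrightarrow> coeff_hom \<phi> 0 = 0"
  by (simp add: coeff_hom_def constMx_zero R_alg_hom_zero)

lemma coeff_hom_mult: "R_alg_hom \<phi> \<Longrightarrow> coeff_hom \<phi> (a * b) = coeff_hom \<phi> a * coeff_hom \<phi> b"
  by (simp add: coeff_hom_def constMx_mult R_alg_hom_mult)

lemma coeff_hom_sum: "R_alg_hom \<phi> \<Longrightarrow> coeff_hom \<phi> (sum g A) = (\<Sum>a\<in>A. coeff_hom \<phi> (g a))"
  by (simp add: coeff_hom_def constMx_sum R_alg_hom_sum)

lemma coeff_hom_constM: "R_alg_hom \<phi> \<Longrightarrow> coeff_hom \<phi> (constM c) = c"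
  by (simp add: coeff_hom_def R_alg_hom_const)

lemma mmap_add: "mmap (f + g) = mmap f + mmap g"
  unfolding mmap_def by (rule setsum_keys_plus_distrib) (simp_all add: distrib_right)

lemma mmap_zero: "mmap 0 = 0"
  by (simp add: mmap_def)

lemma mmap_sum: "mmap (sum g A) = (\<Sum>a\<in>A. mmap (g a))"
  by (induction A rule: infinite_finite_induct) (auto simp: mmap_zero mmap_add)

lemma mmap_single: "mmap (Poly_Mapping.single \<alpha> b) = b * mvar \<alpha>"
  by (simp add: mmap_def)

lemma poly_mapping_eq_sum_single:
  assumes "finite S" "Poly_Mapping.keys f \<subseteq> S"
  shows "f = (\<Sum>\<alpha>\<in>S. Poly_Mapping.single \<alpha> (Poly_Mapping.lookup f \<alpha>))"
  by (rule poly_mapping_eqI)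
    (use assms in \<open>auto simp: lookup_sum lookup_single when_def in_keys_iff\<close>)

lemma exists_poly_mapping_on:
  assumes "finite S"
  shows "\<exists>p :: 'a \<Rightarrow>\<^sub>0 'b::zero. Poly_Mapping.keys p \<subseteq> S \<and> (\<forall>\<alpha>\<in>S. Poly_Mapping.lookup p \<alpha> = c \<alpha>)"
  by (rule exI[of _ "Abs_poly_mapping (\<lambda>\<alpha>. c \<alpha> when \<alpha> \<in> S)"])
    (use assms in \<open>auto simp: in_keys_iff when_def split: if_splits\<close>)

definition quad_form :: "'a set \<Rightarrow> ('a \<Rightarrow> 'a \<Rightarrow> real) \<Rightarrow> ('a \<Rightarrow> real) \<Rightarrow> real" where
  "quad_form S M c = (\<Sum>u\<in>S. \<Sum>v\<in>S. c u * M u v * c v)"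

lemma quad_form_cong: "(\<And>u. u \<in> S \<Longrightarrow> c u = c' u) \<Longrightarrow> quad_form S M c = quad_form S M c'"
  by (simp add: quad_form_def)

definition moment_matrix :: "('n Mxring \<Rightarrow> real) \<Rightarrow> 'n monom \<Rightarrow> 'n monom \<Rightarrow> real" where
  "moment_matrix \<phi> u v = \<phi> (constMx (mmap (xmon u * xmon v)))"

lemma moment_matrix_eq: "moment_matrix \<phi> u v = coeff_hom \<phi> (mvar (u + v))"
  by (simp add: moment_matrix_def coeff_hom_def xmon_def mult_single mmap_single)

lemma psd_on_moment_matrix_iff:
  "psd_on S (moment_matrix \<phi>) \<longleftrightarrow> (\<forall>c. quad_form S (moment_matrix \<phi>) c \<ge> 0)"
  by (simp add: psd_on_def quad_form_def moment_matrix_eq add.commute)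

lemma R_alg_hom_mmap_square:
  assumes hom: "R_alg_hom \<phi>" and S: "finite S" "Poly_Mapping.keys f \<subseteq> S"
  shows "\<phi> (constMx (mmap (f ^ 2)))
    = quad_form S (moment_matrix \<phi>) (\<lambda>\<alpha>. coeff_hom \<phi> (Poly_Mapping.lookup f \<alpha>))"
proof -
  have "f ^ 2 = (\<Sum>\<alpha>\<in>S. \<Sum>\<beta>\<in>S.
      Poly_Mapping.single (\<alpha> + \<beta>) (Poly_Mapping.lookup f \<alpha> * Poly_Mapping.lookup f \<beta>))"
    by (subst poly_mapping_eq_sum_single[OF S])
      (simp add: power2_eq_square sum_product mult_single)
  then have "mmap (f ^ 2) = (\<Sum>\<alpha>\<in>S. \<Sum>\<beta>\<in>S.
      Poly_Mapping.lookup f \<alpha> * Poly_Mapping.lookup f \<beta> * mvar (\<alpha> + \<beta>))"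
    by (simp add: mmap_sum mmap_single)
  then show ?thesis
    using hom by (simp add: coeff_hom_def[symmetric] coeff_hom_sum coeff_hom_mult
        quad_form_def moment_matrix_eq mult_ac)
qed

lemma lookup_embR: "Poly_Mapping.lookup (embR p) \<alpha> = constM (Poly_Mapping.lookup p \<alpha>)"
  by (simp add: embR_def map.rep_eq when_def constM_def)

lemma constM_eq_0_iff: "constM c = 0 \<longleftrightarrow> c = 0"
  unfolding constM_def by (metis lookup_single_eq single_zero)

lemma keys_embR: "Poly_Mapping.keys (embR p) = Poly_Mapping.keys p"
  by (auto simp: in_keys_iff lookup_embR constM_eq_0_iff)

lemma R_alg_hom_mmap_embR_square:
  assumes "R_alg_hom \<phi>" "finite S" "Poly_Mapping.keys p \<subseteq> S"
  shows "\<phi> (constMx (mmap (embR p ^ 2))) = quad_form S (moment_matrix \<phi>) (Poly_Mapping.lookup p)"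
  using R_alg_hom_mmap_square[of \<phi> S "embR p"] assms
  by (simp add: keys_embR lookup_embR coeff_hom_constM)

lemma R_alg_hom_mmap_square_eq_embR:
  assumes hom: "R_alg_hom \<phi>"
  shows "\<phi> (constMx (mmap (f ^ 2)))
    = \<phi> (constMx (mmap (embR (Poly_Mapping.map (coeff_hom \<phi>) f) ^ 2)))"
proof -
  let ?p = "Poly_Mapping.map (coeff_hom \<phi>) f"
  have keys: "Poly_Mapping.keys ?p \<subseteq> Poly_Mapping.keys f"
    by (auto simp: in_keys_iff map.rep_eq when_def)
  have lookup_p: "Poly_Mapping.lookup ?p = (\<lambda>\<alpha>. coeff_hom \<phi> (Poly_Mapping.lookup f \<alpha>))"
    using hom by (simp add: map.rep_eq when_def coeff_hom_zero fun_eq_iff)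
  have "\<phi> (constMx (mmap (f ^ 2)))
      = quad_form (Poly_Mapping.keys f) (moment_matrix \<phi>) (Poly_Mapping.lookup ?p)"
    unfolding lookup_p by (rule R_alg_hom_mmap_square[OF hom finite_keys subset_refl])
  also have "\<dots> = \<phi> (constMx (mmap (embR ?p ^ 2)))"
    by (rule R_alg_hom_mmap_embR_square[symmetric, OF hom finite_keys keys])
  finally show ?thesis .
qed

lemma lookup_le_mdeg: "Poly_Mapping.lookup \<alpha> i \<le> mdeg \<alpha>"
  unfolding mdeg_def by (rule member_le_sum) auto

lemma finite_monoms_upto: "finite (monoms_upto d :: 'n::finite monom set)"
proof -
  have "Poly_Mapping.lookup ` monoms_upto d \<subseteq> {f :: 'n \<Rightarrow> nat. \<forall>i. f i \<in> {..d}}"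
    by (auto simp: monoms_upto_def intro: le_trans[OF lookup_le_mdeg])
  moreover have "finite {f :: 'n \<Rightarrow> nat. \<forall>i. f i \<in> {..d}}"
    using finite_set_of_finite_funs[of "UNIV :: 'n set" "{..d}" 0] by simp
  ultimately have "finite (Poly_Mapping.lookup ` (monoms_upto d :: 'n monom set))"
    by (rule finite_subset)
  then show ?thesis
    by (rule finite_imageD) (simp add: inj_on_def poly_mapping.lookup_inject)
qed

lemma finite_subset_monoms_upto:
  assumes "finite A"
  shows "\<exists>d \<ge> 1. A \<subseteq> monoms_upto d"
proof (intro exI conjI)
  show "A \<subseteq> monoms_upto (Suc (Max (mdeg ` A)))"
    using assms by (auto simp: monoms_upto_def le_SucI)
qed simp

theorem lemma3p1:
  fixes \<phi> :: "('n::finite) Mxring \<Rightarrow> real"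
  assumes "R_alg_hom \<phi>"
  shows "((\<forall>f :: 'n Mxring. \<phi> (constMx (mmap (f ^ 2))) \<ge> 0)
          \<longleftrightarrow> (\<forall>p :: 'n rpoly. \<phi> (constMx (mmap (embR p ^ 2))) \<ge> 0))
       \<and> ((\<forall>p :: 'n rpoly. \<phi> (constMx (mmap (embR p ^ 2))) \<ge> 0)
          \<longleftrightarrow> (\<forall>d::nat. d \<ge> 1 \<longrightarrow>
                 psd_on (monoms_upto d)
                   (\<lambda>u v. \<phi> (constMx (mmap (xmon u * xmon v))))))"
proof -
  let ?sos = "\<lambda>p :: 'n rpoly. \<phi> (constMx (mmap (embR p ^ 2)))"
  have "(\<lambda>u v. \<phi> (constMx (mmap (xmon u * xmon v)))) = moment_matrix \<phi>"
    by (simp add: moment_matrix_def [abs_def])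
  moreover have "(\<forall>f :: 'n Mxring. \<phi> (constMx (mmap (f ^ 2))) \<ge> 0) \<longleftrightarrow> (\<forall>p. ?sos p \<ge> 0)"
    using R_alg_hom_mmap_square_eq_embR[OF assms] by metis
  moreover have "(\<forall>p. ?sos p \<ge> 0) \<longleftrightarrow> (\<forall>d \<ge> 1. psd_on (monoms_upto d) (moment_matrix \<phi>))"
  proof (intro iffI allI impI)
    fix d :: nat
    assume sos: "\<forall>p. ?sos p \<ge> 0"
    have "quad_form (monoms_upto d) (moment_matrix \<phi>) c \<ge> 0" for c
    proof -
      obtain p :: "'n rpoly" where p: "Poly_Mapping.keys p \<subseteq> monoms_upto d"
        "\<forall>\<alpha>\<in>monoms_upto d. Poly_Mapping.lookup p \<alpha> = c \<alpha>"
        using exists_poly_mapping_on[OF finite_monoms_upto] by blast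
      then show ?thesis
        using sos R_alg_hom_mmap_embR_square[OF assms finite_monoms_upto p(1)]
        by (metis quad_form_cong)
    qed
    then show "psd_on (monoms_upto d) (moment_matrix \<phi>)"
      by (simp add: psd_on_moment_matrix_iff)
  next
    fix p :: "'n rpoly"
    assume "\<forall>d \<ge> 1. psd_on (monoms_upto d) (moment_matrix \<phi>)"
    moreover obtain d where "d \<ge> 1" "Poly_Mapping.keys p \<subseteq> monoms_upto d"
      using finite_subset_monoms_upto[OF finite_keys] by blast
    ultimately show "?sos p \<ge> 0"
      using R_alg_hom_mmap_embR_square[OF assms finite_monoms_upto]
      by (simp add: psd_on_moment_matrix_iff)
  qed
  ultimately show ?thesis by simp
qed

end
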